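(* Let $f(z)=z+a_2z^2+a_3z^3+\cdots$ be analytic on $\mathbb{D}$, and set $a_1=1$. Let $c_{j,k}$ ($j,k\ge0$) be its Grunsky coefficients. Then for all $j\ge0$ and $k\ge1$, $$c_{j,k}=\sum_{l=1}^{k-1}\frac{l}{k}a_{k-l}c_{j+1,l}-\sum_{m=1}^{j}a_{m+1}c_{j-m,k}-\frac{a_{j+k+1}}{k}.$$
   Context: $\mathbb{D}=\{z\in\mathbb{C}:|z|<1\}$. The Grunsky coefficients $c_{j,k}$ of $f$ are defined by the expansion $\log\frac{f(z)-f(w)}{z-w}=-\sum_{j,k=0}^\infty c_{j,k}z^jw^k$, valid for $|z|,|w|<\varepsilon$ with $\varepsilon>0$ small enough (the branch of the logarithm taking the value $0$ at $z=w=0$). *)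

theory Defs
  imports "HOL-Complex_Analysis.Complex_Analysis"
begin

definition taylor_coeff :: "(complex \<Rightarrow> complex) \<Rightarrow> nat \<Rightarrow> complex" where
  "taylor_coeff f n = (deriv ^^ n) f 0 / fact n"

definition diff_quot :: "(complex \<Rightarrow> complex) \<Rightarrow> complex \<Rightarrow> complex \<Rightarrow> complex" where
  "diff_quot f z w = (if z = w then deriv f z else (f z - f w) / (z - w))"

text \<open>c is the family of Grunsky coefficients of f: for some eps > 0 and all
  |z|,|w| < eps, log((f z - f w)/(z - w)) = - sum c_{j,k} z^j w^k, where the
  logarithm is the principal one (which near z = w = 0, where the quotient is
  near f'(0) = 1, is the branch taking the value 0 at z = w = 0).\<close>
definition grunsky_coeffs :: "(complex \<Rightarrow> complex) \<Rightarrow> (nat \<Rightarrow> nat \<Rightarrow> complex) \<Rightarrow> bool" where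
  "grunsky_coeffs f c \<longleftrightarrow> (\<exists>\<epsilon>>0. \<forall>z w. norm z < \<epsilon> \<and> norm w < \<epsilon> \<longrightarrow>
      ((\<lambda>(j,k). c j k * z ^ j * w ^ k) has_sum (- Ln (diff_quot f z w))) UNIV)"

end

theory Submission
  imports Defs
begin

(*
  Fix a small z ~= 0 and expand phi(w) = -log((f(z) - f(w))/(z - w)) = sum_k b_k(z) w^k,
  where b_k(z) = sum_j c_{j,k} z^j is grunsky_column c k z. Logarithmic differentiation in w gives
  (f(z) - f(w)) phi'(w) = f'(w) - (f(z) - f(w))/(z - w), and the coefficient of w^(k-1) of
  this identity reads
    k f(z) b_k(z) - sum_{l<k} l a_{k-l} b_l(z) = k a_k - sum_p a_{p+k} z^p.
  Both sides are power series in z; comparing their coefficients of z^(j+1) gives the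
  recursion.
*)

lemma fps_expansion_nth_eq_taylor_coeff [simp]:
  "fps_expansion f 0 $ n = taylor_coeff f n"
  by (simp add: fps_expansion_def taylor_coeff_def)

lemma has_fps_expansion_unique_at_0:
  fixes F G :: "complex fps"
  assumes "f has_fps_expansion F" "g has_fps_expansion G"
    and "eventually (\<lambda>z. f z = g z) (at 0)"
  shows "F = G"
proof -
  have "g has_laurent_expansion fps_to_fls F"
    using assms(1,3) has_laurent_expansion_cong has_fps_expansion_to_laurent by blast
  moreover have "g has_laurent_expansion fps_to_fls G"
    using assms(2) has_fps_expansion_to_laurent by blast
  ultimately show ?thesis
    using has_laurent_expansion_unique fps_to_fls_eq_iff by blast
qed

lemma fps_const_eval_fps_diff:
  fixes A :: "'a :: {banach, real_normed_field} fps"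
  assumes "ereal (norm z) < fps_conv_radius A"
  shows "fps_const (eval_fps A z) - A =
           (fps_const z - fps_X) * Abs_fps (\<lambda>q. eval_fps (fps_shift (Suc q) A) z)"
proof -
  define T where "T q = eval_fps (fps_shift q A) z" for q
  have T_sums: "(\<lambda>p. A $ (p + q) * z ^ p) sums T q" for q
    using sums_eval_fps[of z "fps_shift q A"] assms by (simp add: T_def)
  have T_Suc: "T q = A $ q + z * T (Suc q)" for q
  proof -
    have "(\<lambda>p. A $ (Suc p + q) * z ^ Suc p) sums (z * T (Suc q))"
      using sums_mult[OF T_sums[of "Suc q"], of z] by (simp add: mult_ac)
    hence "(\<lambda>p. A $ (p + q) * z ^ p) sums (z * T (Suc q) + A $ q)"
      by (subst (asm) sums_Suc_iff) simp
    with T_sums[of q] show ?thesis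
      by (simp add: sums_iff add_ac)
  qed
  show ?thesis
  proof (rule fps_ext)
    fix q
    show "(fps_const (eval_fps A z) - A) $ q =
          ((fps_const z - fps_X) * Abs_fps (\<lambda>q. eval_fps (fps_shift (Suc q) A) z)) $ q"
      using T_Suc[of 0] T_Suc[of q] by (cases q) (simp_all add: T_def algebra_simps)
  qed
qed

lemma diff_quot_Re_pos_near_0:
  fixes f :: "complex \<Rightarrow> complex"
  assumes holo: "f holomorphic_on ball 0 1" and d: "deriv f 0 = 1"
  obtains r where "r > 0" "r \<le> 1"
    "\<And>z w. norm z < r \<Longrightarrow> norm w < r \<Longrightarrow> z \<noteq> w \<Longrightarrow> Re ((f z - f w) / (z - w)) > 0"
proof -
  have "isCont (deriv f) 0"
    using holomorphic_on_imp_continuous_on[OF holomorphic_deriv[OF holo]]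
    by (simp add: continuous_on_eq_continuous_at)
  then obtain r1 where r1: "r1 > 0" "\<And>x. dist x 0 < r1 \<Longrightarrow> dist (deriv f x) (deriv f 0) < 1/2"
    unfolding continuous_at_eps_delta by (metis half_gt_zero_iff zero_less_one)
  define r where "r = min r1 1"
  show ?thesis
  proof (rule that)
    show "r > 0" "r \<le> 1" using r1 by (auto simp: r_def)
    fix z w :: complex assume z: "norm z < r" and w: "norm w < r" and zw: "z \<noteq> w"
    have "norm ((\<lambda>v. f v - v) z - (\<lambda>v. f v - v) w) \<le> 1/2 * norm (z - w)"
    proof (rule field_differentiable_bound[where S="ball 0 r" and f'="\<lambda>v. deriv f v - 1"])
      fix v :: complex assume v: "v \<in> ball 0 r"
      have "(f has_field_derivative deriv f v) (at v within ball 0 r)"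
        by (rule holomorphic_derivI[OF holo]) (use v in \<open>auto simp: r_def\<close>)
      thus "((\<lambda>v. f v - v) has_field_derivative deriv f v - 1) (at v within ball 0 r)"
        by (auto intro!: derivative_eq_intros)
      show "norm (deriv f v - 1) \<le> 1/2"
        using r1(2)[of v] v d by (simp add: dist_norm r_def)
    qed (use z w in auto)
    hence "norm ((f z - f w) / (z - w) - 1) \<le> 1/2"
      using zw by (simp add: norm_divide divide_le_eq field_simps norm_minus_commute)
    moreover have "Re (1 - (f z - f w) / (z - w)) \<le> norm ((f z - f w) / (z - w) - 1)"
      by (metis complex_Re_le_cmod norm_minus_commute)
    ultimately show "Re ((f z - f w) / (z - w)) > 0" by simp
  qed
qed

lemma double_power_series_sums_by_columns:
  fixes c :: "nat \<Rightarrow> nat \<Rightarrow> complex"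
  assumes "\<epsilon> > 0"
    and H: "\<And>z w. norm z < \<epsilon> \<Longrightarrow> norm w < \<epsilon> \<Longrightarrow>
              ((\<lambda>(j,k). c j k * z ^ j * w ^ k) has_sum L z w) UNIV"
    and z: "norm z < \<epsilon>"
  shows "(\<lambda>j. c j k * z ^ j) sums (\<Sum>\<^sub>\<infinity>j. c j k * z ^ j)"
    and "norm w < \<epsilon> \<Longrightarrow> (\<lambda>k. (\<Sum>\<^sub>\<infinity>j. c j k * z ^ j) * w ^ k) sums L z w"
proof -
  have by_columns: "((\<lambda>(k,j). c j k * z ^ j * w ^ k) has_sum L z w) (UNIV \<times> UNIV)"
    if "norm w < \<epsilon>" for w
    using H[OF z that] by (subst has_sum_swap) (simp add: case_prod_unfold)
  have column_summable: "(\<lambda>j. c j k * z ^ j) summable_on UNIV" for k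
  proof -
    define w0 :: complex where "w0 = of_real (\<epsilon> / 2)"
    have w0: "norm w0 < \<epsilon>" "w0 \<noteq> 0"
      using \<open>\<epsilon> > 0\<close> by (auto simp: w0_def)
    have "(\<lambda>j. c j k * z ^ j * w0 ^ k) summable_on UNIV"
      using summable_on_SigmaD1[of "\<lambda>k j. c j k * z ^ j * w0 ^ k" UNIV "\<lambda>_. UNIV" k]
        by_columns[OF w0(1)] by (auto simp: summable_on_def)
    hence "(\<lambda>j. c j k * z ^ j * w0 ^ k * inverse (w0 ^ k)) summable_on UNIV"
      by (rule summable_on_cmult_left)
    moreover have "c j k * z ^ j * w0 ^ k * inverse (w0 ^ k) = c j k * z ^ j" for j
      using w0 by (simp add: field_simps)
    ultimately show ?thesis by simp
  qed
  show "(\<lambda>j. c j k * z ^ j) sums (\<Sum>\<^sub>\<infinity>j. c j k * z ^ j)"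
    by (intro has_sum_imp_sums has_sum_infsum column_summable)
  assume w: "norm w < \<epsilon>"
  have "((\<lambda>k. \<Sum>\<^sub>\<infinity>j. c j k * z ^ j * w ^ k) has_sum L z w) UNIV"
  proof (rule has_sum_Sigma'[where f="\<lambda>(k,j). c j k * z ^ j * w ^ k" and A=UNIV and B="\<lambda>_. UNIV"])
    show "((\<lambda>(k,j). c j k * z ^ j * w ^ k) has_sum L z w) (UNIV \<times> UNIV)"
      by (rule by_columns[OF w])
    fix k
    show "((\<lambda>j. (\<lambda>(k,j). c j k * z ^ j * w ^ k) (k, j)) has_sum (\<Sum>\<^sub>\<infinity>j. c j k * z ^ j * w ^ k)) UNIV"
      using summable_on_cmult_left[OF column_summable[of k], of "w ^ k"] by (simp add: has_sum_infsum)
  qed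
  moreover have "(\<Sum>\<^sub>\<infinity>j. c j k * z ^ j * w ^ k) = (\<Sum>\<^sub>\<infinity>j. c j k * z ^ j) * w ^ k" for k
    by (rule infsum_cmult_left) (rule column_summable)
  ultimately show "(\<lambda>k. (\<Sum>\<^sub>\<infinity>j. c j k * z ^ j) * w ^ k) sums L z w"
    by (intro has_sum_imp_sums) simp
qed

definition grunsky_column :: "(nat \<Rightarrow> nat \<Rightarrow> complex) \<Rightarrow> nat \<Rightarrow> complex \<Rightarrow> complex" where
  "grunsky_column c k z = (\<Sum>\<^sub>\<infinity>j. c j k * z ^ j)"

lemma grunsky_coeffs_sums_by_columns:
  assumes "grunsky_coeffs f c"
  obtains \<epsilon> where "\<epsilon> > 0"
    and "\<And>z k. norm z < \<epsilon> \<Longrightarrow> (\<lambda>j. c j k * z ^ j) sums grunsky_column c k z"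
    and "\<And>z w. norm z < \<epsilon> \<Longrightarrow> norm w < \<epsilon> \<Longrightarrow>
           (\<lambda>k. grunsky_column c k z * w ^ k) sums (- Ln (diff_quot f z w))"
proof -
  obtain \<epsilon> where "\<epsilon> > 0" and H: "\<And>z w. norm z < \<epsilon> \<Longrightarrow> norm w < \<epsilon> \<Longrightarrow>
      ((\<lambda>(j,k). c j k * z ^ j * w ^ k) has_sum (- Ln (diff_quot f z w))) UNIV"
    using assms unfolding grunsky_coeffs_def by blast
  from that[OF \<open>\<epsilon> > 0\<close>] double_power_series_sums_by_columns[OF \<open>\<epsilon> > 0\<close> H]
  show ?thesis unfolding grunsky_column_def by blast
qed

lemma grunsky_column_has_fps_expansion:
  assumes "grunsky_coeffs f c"
  shows "grunsky_column c k has_fps_expansion Abs_fps (\<lambda>j. c j k)"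
proof -
  obtain \<epsilon> where "\<epsilon> > 0" and col: "\<And>z k. norm z < \<epsilon> \<Longrightarrow> (\<lambda>j. c j k * z ^ j) sums grunsky_column c k z"
    using grunsky_coeffs_sums_by_columns[OF assms] by metis
  have "eventually (\<lambda>z. norm z < \<epsilon>) (nhds 0)"
    using \<open>\<epsilon> > 0\<close> by (simp add: eventually_nhds_metric dist_norm) blast
  hence "eventually (\<lambda>z. (\<lambda>j. Abs_fps (\<lambda>j. c j k) $ j * z ^ j) sums grunsky_column c k z) (nhds 0)"
    by eventually_elim (simp add: col)
  thus ?thesis
    by (rule has_fps_expansionI)
qed

lemma grunsky_log_diff_quot_has_fps_expansion:
  assumes "grunsky_coeffs f c"
  shows "eventually (\<lambda>z. (\<lambda>w. - Ln (diff_quot f z w))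
           has_fps_expansion Abs_fps (\<lambda>k. grunsky_column c k z)) (nhds 0)"
proof -
  obtain \<epsilon> where "\<epsilon> > 0" and rows: "\<And>z w. norm z < \<epsilon> \<Longrightarrow> norm w < \<epsilon> \<Longrightarrow>
           (\<lambda>k. grunsky_column c k z * w ^ k) sums (- Ln (diff_quot f z w))"
    using grunsky_coeffs_sums_by_columns[OF assms] by metis
  have small: "eventually (\<lambda>z. norm z < \<epsilon>) (nhds 0)"
    using \<open>\<epsilon> > 0\<close> by (simp add: eventually_nhds_metric dist_norm) blast
  show ?thesis
    using small
  proof eventually_elim
    case (elim z)
    from small have "eventually (\<lambda>w. (\<lambda>k. Abs_fps (\<lambda>k. grunsky_column c k z) $ k * w ^ k)
                       sums (- Ln (diff_quot f z w))) (nhds 0)"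
      by eventually_elim (simp add: rows[OF elim])
    thus ?case
      by (rule has_fps_expansionI)
  qed
qed

lemma log_deriv_diff_quot:
  fixes f :: "complex \<Rightarrow> complex"
  assumes holo: "f holomorphic_on S" and "open S" "w \<in> S" "w \<noteq> z"
    and pos: "Re ((f z - f w) / (z - w)) > 0"
  shows "(z - w) * ((f z - f w) * deriv (\<lambda>v. - Ln (diff_quot f z v)) w) =
           (z - w) * deriv f w - (f z - f w)"
proof -
  define Q where "Q = (f z - f w) / (z - w)"
  have "Q \<notin> \<real>\<^sub>\<le>\<^sub>0" "Q \<noteq> 0"
    using pos by (auto simp: Q_def complex_nonpos_Reals_iff)
  hence fzw: "f z - f w \<noteq> 0"
    by (auto simp: Q_def)
  have df: "(f has_field_derivative deriv f w) (at w)"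
    using holo \<open>open S\<close> \<open>w \<in> S\<close> by (intro holomorphic_derivI) auto
  define dQ where "dQ = ((f z - f w) - deriv f w * (z - w)) / (z - w)^2"
  define q where "q v = (f z - f v) / (z - v)" for v
  have "(q has_field_derivative dQ) (at w)"
    unfolding q_def dQ_def using \<open>w \<noteq> z\<close>
    by (auto intro!: derivative_eq_intros df simp: field_simps power2_eq_square)
  moreover have "(Ln has_field_derivative inverse Q) (at (q w))"
    using has_field_derivative_Ln[OF \<open>Q \<notin> \<real>\<^sub>\<le>\<^sub>0\<close>] by (simp add: Q_def q_def)
  ultimately have "((\<lambda>v. - Ln (q v)) has_field_derivative - (inverse Q * dQ)) (at w)"
    by (intro DERIV_minus) (rule DERIV_chain2)
  hence "((\<lambda>v. - Ln (diff_quot f z v)) has_field_derivative - (inverse Q * dQ)) (at w)"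
    by (rule has_field_derivative_transform_within_open[where S="S - {z}"])
       (use \<open>open S\<close> \<open>w \<in> S\<close> \<open>w \<noteq> z\<close> in \<open>auto simp: diff_quot_def q_def\<close>)
  hence "deriv (\<lambda>v. - Ln (diff_quot f z v)) w = - (inverse Q * dQ)"
    by (rule DERIV_imp_deriv)
  hence "(z - w) * ((f z - f w) * deriv (\<lambda>v. - Ln (diff_quot f z v)) w) =
           - ((z - w) * (((f z - f w) * inverse Q) * dQ))"
    by (simp add: mult.assoc)
  also have "(f z - f w) * inverse Q = z - w"
    using fzw by (simp add: Q_def)
  also have "(z - w) * ((z - w) * dQ) = (f z - f w) - deriv f w * (z - w)"
    using \<open>w \<noteq> z\<close> unfolding dQ_def by (simp add: power2_eq_square)
  also have "- ((f z - f w) - deriv f w * (z - w)) = (z - w) * deriv f w - (f z - f w)"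
    by (simp add: algebra_simps)
  finally show ?thesis .
qed

lemma fps_identity_from_log_deriv:
  fixes f \<phi> :: "complex \<Rightarrow> complex"
  assumes f: "f has_fps_expansion A" and \<phi>: "\<phi> has_fps_expansion B"
    and z: "ereal (norm z) < fps_conv_radius A" "eval_fps A z = f z" "z \<noteq> 0"
    and eq: "eventually (\<lambda>w. (z - w) * ((f z - f w) * deriv \<phi> w) =
                             (z - w) * deriv f w - (f z - f w)) (nhds 0)"
  shows "(fps_const (f z) - A) * fps_deriv B =
           fps_deriv A - Abs_fps (\<lambda>q. eval_fps (fps_shift (Suc q) A) z)"
proof -
  define D where "D = Abs_fps (\<lambda>q. eval_fps (fps_shift (Suc q) A) z)"
  \<comment> \<open>Clear the denominator z - w, compare expansions, then cancel the nonzero series z - X.\<close>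
  have "(\<lambda>w. (z - w) * ((f z - f w) * deriv \<phi> w)) has_fps_expansion
          (fps_const z - fps_X) * ((fps_const (f z) - A) * fps_deriv B)"
    by (intro fps_expansion_intros f \<phi>)
  hence "(\<lambda>w. (z - w) * deriv f w - (f z - f w)) has_fps_expansion
          (fps_const z - fps_X) * ((fps_const (f z) - A) * fps_deriv B)"
    using has_fps_expansion_cong[OF eq refl] by blast
  moreover have "(\<lambda>w. (z - w) * deriv f w - (f z - f w)) has_fps_expansion
          (fps_const z - fps_X) * fps_deriv A - (fps_const (f z) - A)"
    by (intro fps_expansion_intros f)
  ultimately have "(fps_const z - fps_X) * ((fps_const (f z) - A) * fps_deriv B) =
                   (fps_const z - fps_X) * fps_deriv A - (fps_const (f z) - A)"
    by (rule fps_expansion_unique_complex)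
  moreover have "fps_const (f z) - A = (fps_const z - fps_X) * D"
    using fps_const_eval_fps_diff[OF z(1)] z(2) by (simp add: D_def)
  ultimately have "(fps_const z - fps_X) * ((fps_const (f z) - A) * fps_deriv B) =
                (fps_const z - fps_X) * (fps_deriv A - D)"
    by (simp add: right_diff_distrib)
  moreover have "fps_const z - fps_X \<noteq> (0 :: complex fps)"
  proof
    assume "fps_const z - fps_X = (0 :: complex fps)"
    hence "(fps_const z - fps_X) $ 0 = (0 :: complex fps) $ 0" by simp
    with z(3) show False by simp
  qed
  ultimately show ?thesis
    by (simp add: D_def)
qed

lemma fps_const_diff_mult_deriv_nth:
  fixes A B :: "'a :: comm_ring_1 fps"
  assumes "A $ 0 = 0" "k \<ge> 1"
  shows "((fps_const x - A) * fps_deriv B) $ (k - 1) =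
           of_nat k * (x * B $ k) - (\<Sum>l=1..k-1. of_nat l * A $ (k - l) * B $ l)"
proof -
  have "((fps_const x - A) * fps_deriv B) $ (k - 1) =
          (\<Sum>i=0..k-1. (fps_const x - A) $ i * (of_nat (k - i) * B $ (k - i)))"
    unfolding fps_mult_nth fps_deriv_nth
    by (intro sum.cong refl) (use assms(2) in \<open>simp add: Suc_diff_Suc\<close>)
  also have "\<dots> = x * (of_nat k * B $ k) - (\<Sum>i=1..k-1. A $ i * (of_nat (k - i) * B $ (k - i)))"
    using assms(1) by (simp add: sum.atLeast_Suc_atMost sum_negf del: of_nat_diff)
  also have "(\<Sum>i=1..k-1. A $ i * (of_nat (k - i) * B $ (k - i))) =
               (\<Sum>l=1..k-1. of_nat l * A $ (k - l) * B $ l)"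
    by (rule sum.reindex_bij_witness[where i="\<lambda>l. k - l" and j="\<lambda>i. k - i"]) auto
  finally show ?thesis
    by (simp add: mult_ac)
qed

lemma grunsky_column_relation:
  assumes holo: "f holomorphic_on ball 0 1" and "f 0 = 0" "deriv f 0 = 1"
    and grunsky: "grunsky_coeffs f c" and "k \<ge> 1"
  shows "eventually (\<lambda>z. of_nat k * (f z * grunsky_column c k z)
            - (\<Sum>l=1..k-1. of_nat l * taylor_coeff f (k - l) * grunsky_column c l z)
          = of_nat k * taylor_coeff f k - eval_fps (fps_shift k (fps_expansion f 0)) z) (at 0)"
proof -
  define A where "A = fps_expansion f 0"
  have A: "f has_fps_expansion A"
    unfolding A_def by (rule has_fps_expansion_fps_expansion[OF _ _ holo]) auto
  obtain r where "r > 0" "r \<le> 1" and pos: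
    "\<And>z w. norm z < r \<Longrightarrow> norm w < r \<Longrightarrow> z \<noteq> w \<Longrightarrow> Re ((f z - f w) / (z - w)) > 0"
    using diff_quot_Re_pos_near_0[OF holo \<open>deriv f 0 = 1\<close>] by metis
  have "eventually (\<lambda>z. norm z < r) (nhds 0)"
    using \<open>r > 0\<close> by (simp add: eventually_nhds_metric dist_norm) blast
  moreover have "eventually (\<lambda>z. ereal (norm z) < fps_conv_radius A) (nhds 0)"
    using A by (intro eventually_nhds_in_open[of "eball 0 (fps_conv_radius A)", THEN eventually_mono])
               (auto simp: has_fps_expansion_def zero_ereal_def)
  moreover have "eventually (\<lambda>z. eval_fps A z = f z) (nhds 0)"
    using A by (simp add: has_fps_expansion_def)
  moreover note grunsky_log_diff_quot_has_fps_expansion[OF grunsky]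
  ultimately show ?thesis
    unfolding eventually_at_filter
  proof eventually_elim
    case (elim z)
    show ?case
    proof (intro impI)
      assume "z \<noteq> 0"
      define \<phi> where "\<phi> w = - Ln (diff_quot f z w)" for w
      have "eventually (\<lambda>w. w \<in> ball 0 (norm z)) (nhds 0)"
        using \<open>z \<noteq> 0\<close> by (intro eventually_nhds_in_open) auto
      hence "eventually (\<lambda>w. (z - w) * ((f z - f w) * deriv \<phi> w) =
                              (z - w) * deriv f w - (f z - f w)) (nhds 0)"
      proof eventually_elim
        case (elim w)
        hence "w \<noteq> z" "norm w < r"
          using \<open>norm z < r\<close> by auto
        thus ?case
          unfolding \<phi>_def using \<open>r \<le> 1\<close>
          by (intro log_deriv_diff_quot[OF holo] pos \<open>norm z < r\<close>) auto
      qed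
      from fps_identity_from_log_deriv[OF A elim(4)[folded \<phi>_def] elim(2,3) \<open>z \<noteq> 0\<close> this]
      have "((fps_const (f z) - A) * fps_deriv (Abs_fps (\<lambda>k. grunsky_column c k z))) $ (k - 1) =
              (fps_deriv A - Abs_fps (\<lambda>q. eval_fps (fps_shift (Suc q) A) z)) $ (k - 1)"
        by simp
      thus "of_nat k * (f z * grunsky_column c k z)
              - (\<Sum>l=1..k-1. of_nat l * taylor_coeff f (k - l) * grunsky_column c l z)
            = of_nat k * taylor_coeff f k - eval_fps (fps_shift k (fps_expansion f 0)) z"
        using \<open>k \<ge> 1\<close> \<open>f 0 = 0\<close>
        by (subst (asm) fps_const_diff_mult_deriv_nth) (simp_all add: A_def taylor_coeff_def)
    qed
  qed
qed

lemma grunsky_recursion_from_coeff_identity: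
  fixes a :: "nat \<Rightarrow> 'a :: field_char_0" and c :: "nat \<Rightarrow> nat \<Rightarrow> 'a"
  assumes "k \<ge> 1" "a 0 = 0" "a 1 = 1"
    and identity: "of_nat k * (\<Sum>n=0..j+1. a n * c (j + 1 - n) k)
                    - (\<Sum>l=1..k-1. of_nat l * a (k - l) * c (j + 1) l) = - a (j + k + 1)"
  shows "c j k =
      (\<Sum>l=1..k-1. of_nat l / of_nat k * a (k - l) * c (j + 1) l)
    - (\<Sum>m=1..j. a (m + 1) * c (j - m) k)
    - a (j + k + 1) / of_nat k"
proof -
  have "(\<Sum>n=0..j+1. a n * c (j + 1 - n) k) = c j k + (\<Sum>m=1..j. a (m + 1) * c (j - m) k)"
  proof -
    have "(\<Sum>n=0..j+1. a n * c (j + 1 - n) k) = a 0 * c (j + 1) k + (\<Sum>i=0..j. a (Suc i) * c (j - i) k)"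
      using sum.atLeast0_atMost_Suc_shift[of "\<lambda>n. a n * c (j + 1 - n) k" j] by simp
    also have "(\<Sum>i=0..j. a (Suc i) * c (j - i) k) = a 1 * c j k + (\<Sum>m=1..j. a (m + 1) * c (j - m) k)"
      by (simp add: sum.atLeast_Suc_atMost)
    finally show ?thesis
      using assms(2,3) by simp
  qed
  moreover have "(\<Sum>l=1..k-1. of_nat l / of_nat k * a (k - l) * c (j + 1) l) =
                 (\<Sum>l=1..k-1. of_nat l * a (k - l) * c (j + 1) l) / of_nat k"
    by (simp add: sum_divide_distrib)
  ultimately show ?thesis
    using identity \<open>k \<ge> 1\<close> by (simp add: field_simps)
qed

lemma grunsky_coeff_identity:
  assumes "f holomorphic_on ball 0 1" "f 0 = 0" "deriv f 0 = 1" "grunsky_coeffs f c" "k \<ge> 1"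
  shows "of_nat k * (\<Sum>n=0..j+1. taylor_coeff f n * c (j + 1 - n) k)
           - (\<Sum>l=1..k-1. of_nat l * taylor_coeff f (k - l) * c (j + 1) l)
         = - taylor_coeff f (j + k + 1)"
proof -
  define a where "a = taylor_coeff f"
  define A where "A = fps_expansion f 0"
  define C where "C l = Abs_fps (\<lambda>j. c j l)" for l
  have A: "f has_fps_expansion A"
    unfolding A_def by (rule has_fps_expansion_fps_expansion[OF _ _ assms(1)]) auto
  have A_nth: "A $ n = a n" for n
    by (simp add: A_def a_def)
  have "(\<lambda>z. of_nat k * (f z * grunsky_column c k z)
            - (\<Sum>l=1..k-1. of_nat l * a (k - l) * grunsky_column c l z)) has_fps_expansion
        fps_const (of_nat k) * (A * C k) - (\<Sum>l=1..k-1. fps_const (of_nat l * a (k - l)) * C l)"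
    unfolding C_def
    by (intro fps_expansion_intros A grunsky_column_has_fps_expansion[OF assms(4)])
  moreover have "(\<lambda>z. of_nat k * a k - eval_fps (fps_shift k A) z) has_fps_expansion
                 fps_const (of_nat k * a k) - fps_shift k A"
    using A by (intro fps_expansion_intros eval_fps_has_fps_expansion)
               (simp_all add: has_fps_expansion_def)
  ultimately have fps_eq:
    "fps_const (of_nat k) * (A * C k) - (\<Sum>l=1..k-1. fps_const (of_nat l * a (k - l)) * C l)
       = fps_const (of_nat k * a k) - fps_shift k A"
    using grunsky_column_relation[OF assms] unfolding a_def A_def
    by (rule has_fps_expansion_unique_at_0)
  have "(A * C k) $ (j + 1) = (\<Sum>n=0..j+1. a n * c (j + 1 - n) k)"
    by (simp add: fps_mult_nth A_nth C_def atLeast0AtMost)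
  with arg_cong[where f="\<lambda>F. F $ (j + 1)", OF fps_eq]
  show ?thesis
    by (simp add: fps_sum_nth C_def A_nth a_def add_ac)
qed

theorem lemma3p4:
  fixes f :: "complex \<Rightarrow> complex" and c :: "nat \<Rightarrow> nat \<Rightarrow> complex" and j k :: nat
  assumes "f holomorphic_on ball 0 1"
    and "f 0 = 0" and "deriv f 0 = 1"
    and "grunsky_coeffs f c"
    and "k \<ge> 1"
  shows "c j k =
      (\<Sum>l=1..k-1. of_nat l / of_nat k * taylor_coeff f (k - l) * c (j + 1) l)
    - (\<Sum>m=1..j. taylor_coeff f (m + 1) * c (j - m) k)
    - taylor_coeff f (j + k + 1) / of_nat k"
proof (rule grunsky_recursion_from_coeff_identity[OF \<open>k \<ge> 1\<close>])
  show "taylor_coeff f 0 = 0" "taylor_coeff f 1 = 1"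
    using assms(2,3) by (simp_all add: taylor_coeff_def)
qed (rule grunsky_coeff_identity[OF assms])

end
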